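(* Let $\lambda_0,\lambda\in\{-1,0,1\}$. Let $M_0$ be a Riemann surface of constant Gauss curvature $K_0=-\lambda_0$ with local complex coordinate $z$, complexified coframe $e_0=\frac{2\,dz}{1+K_0|z|^2}$, spin connection $\Gamma_0=iK_0\frac{z\,d\bar z-\bar z\,dz}{1+K_0|z|^2}$ and Kähler form $\omega_0=\frac{i}{2}e_0\wedge\bar e_0$; let $M$ be a Riemann surface of constant Gauss curvature $K=-\lambda$ with coframe $e$, spin connection $\Gamma$ given by the same formulas with $K$ in place of $K_0$, and let $\hat A=-\Gamma t_0+\frac i2(e\,t_--\bar e\,t_+)$. Let $f:M_0\to M$ be holomorphic, and define a complex function $\phi$ and a real one-form $a$ on $M_0$ by $f^*e=\phi\, e_0$ and $a=f^*\Gamma-\Gamma_0$. Then $$f^*\hat A=-(a+\Gamma_0)\,t_0+\frac{i}{2}\left(\phi\, e_0\, t_- -\bar\phi\,\bar e_0\, t_+\right),$$ and, for a complex function $\phi$ and real one-form $a$ on $M_0$, the $\mathrm{Lie}(\mathbb{H}^1_\lambda)$-valued connection $-(a+\Gamma_0)t_0+\frac{i}{2}(\phi e_0 t_--\bar\phi\bar e_0 t_+)$ is flat if and only if $(\phi,a)$ satisfies the $(\lambda_0,\lambda)$ vortex equations $$(d\phi-ia\phi)\wedge e_0=0,\qquad da=(\lambda_0-\lambda|\phi|^2)\,\omega_0 .$$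
   Context: $\mathbb{H}^1_\lambda$ is the matrix group $\left\{\begin{pmatrix} z_1&\lambda\bar z_2\\ z_2&\bar z_1\end{pmatrix}: |z_1|^2-\lambda|z_2|^2=1\right\}$ with Lie algebra basis $t_0=-\frac{i}{2}\begin{pmatrix}1&0\\0&-1\end{pmatrix}$, $t_1=-\frac{i}{2}\begin{pmatrix}0&-\lambda\\1&0\end{pmatrix}$, $t_2=\frac12\begin{pmatrix}0&\lambda\\1&0\end{pmatrix}$, $t_\pm=t_1\pm it_2$. Flatness of a Lie-algebra-valued one-form $B$ means $dB+B\wedge B=0$. *)

theory Defs
  imports "HOL-Analysis.Analysis"
begin

text \<open>A Riemann surface of constant curvature K is represented by a
coordinate patch (open subset of the complex plane, coordinate z = x + i y) on which
1 + K |z|^2 > 0.  A one-form with values in a real vector space 'a is represented by its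
pair of coefficient functions (dx-coefficient, dy-coefficient); a two-form by its
dx/\dy-coefficient.\<close>

type_synonym 'a form1 = "complex \<Rightarrow> 'a \<times> 'a"
type_synonym 'a form2 = "complex \<Rightarrow> 'a"

definition pdx :: "(complex \<Rightarrow> 'a::real_normed_vector) \<Rightarrow> complex \<Rightarrow> 'a" where
  "pdx g z = frechet_derivative g (at z) 1"
definition pdy :: "(complex \<Rightarrow> 'a::real_normed_vector) \<Rightarrow> complex \<Rightarrow> 'a" where
  "pdy g z = frechet_derivative g (at z) \<i>"

definition dfun :: "(complex \<Rightarrow> 'a::real_normed_vector) \<Rightarrow> 'a form1" where
  "dfun g z = (pdx g z, pdy g z)"
definition dform :: "('a::real_normed_vector) form1 \<Rightarrow> 'a form2" where
  "dform \<omega> z = pdx (\<lambda>w. snd (\<omega> w)) z - pdy (\<lambda>w. fst (\<omega> w)) z"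

definition wedge :: "complex form1 \<Rightarrow> complex form1 \<Rightarrow> complex form2" where
  "wedge \<omega> \<eta> z = fst (\<omega> z) * snd (\<eta> z) - snd (\<omega> z) * fst (\<eta> z)"
definition mwedge :: "(complex^2^2) form1 \<Rightarrow> (complex^2^2) form1 \<Rightarrow> (complex^2^2) form2" where
  "mwedge \<omega> \<eta> z = fst (\<omega> z) ** snd (\<eta> z) - snd (\<omega> z) ** fst (\<eta> z)"

definition flat_at :: "(complex^2^2) form1 \<Rightarrow> complex \<Rightarrow> bool" where
  "flat_at B z \<longleftrightarrow> dform B z + mwedge B B z = 0"

definition fscale :: "(complex \<Rightarrow> complex) \<Rightarrow> complex form1 \<Rightarrow> complex form1" where
  "fscale c \<omega> z = (c z * fst (\<omega> z), c z * snd (\<omega> z))"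
definition fadd :: "complex form1 \<Rightarrow> complex form1 \<Rightarrow> complex form1" where
  "fadd \<omega> \<eta> z = (fst (\<omega> z) + fst (\<eta> z), snd (\<omega> z) + snd (\<eta> z))"
definition fsub :: "complex form1 \<Rightarrow> complex form1 \<Rightarrow> complex form1" where
  "fsub \<omega> \<eta> z = (fst (\<omega> z) - fst (\<eta> z), snd (\<omega> z) - snd (\<eta> z))"
definition fconj :: "complex form1 \<Rightarrow> complex form1" where
  "fconj \<omega> z = (cnj (fst (\<omega> z)), cnj (snd (\<omega> z)))"
definition cform :: "real form1 \<Rightarrow> complex form1" where
  "cform a z = (complex_of_real (fst (a z)), complex_of_real (snd (a z)))"

definition dz_form :: "complex form1" where "dz_form z = (1, \<i>)"
definition dzbar_form :: "complex form1" where "dzbar_form z = (1, - \<i>)"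

definition coframe :: "real \<Rightarrow> complex form1" where
  "coframe K = fscale (\<lambda>z. 2 / complex_of_real (1 + K * (cmod z)^2)) dz_form"
definition spin :: "real \<Rightarrow> complex form1" where
  "spin K = fscale (\<lambda>z. \<i> * complex_of_real K / complex_of_real (1 + K * (cmod z)^2))
              (fsub (fscale (\<lambda>z. z) dzbar_form) (fscale (\<lambda>z. cnj z) dz_form))"
definition kahler :: "real \<Rightarrow> complex form2" where
  "kahler K z = (\<i> / 2) * wedge (coframe K) (fconj (coframe K)) z"

definition pullback :: "(complex \<Rightarrow> complex) \<Rightarrow> ('a::real_vector) form1 \<Rightarrow> 'a form1" where
  "pullback f \<omega> z =
     (pdx (\<lambda>w. Re (f w)) z *\<^sub>R fst (\<omega> (f z)) + pdx (\<lambda>w. Im (f w)) z *\<^sub>R snd (\<omega> (f z)),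
      pdy (\<lambda>w. Re (f w)) z *\<^sub>R fst (\<omega> (f z)) + pdy (\<lambda>w. Im (f w)) z *\<^sub>R snd (\<omega> (f z)))"

definition mat2 :: "complex \<Rightarrow> complex \<Rightarrow> complex \<Rightarrow> complex \<Rightarrow> complex^2^2" where
  "mat2 a b c d = (\<chi> i j. if i = 1 then (if j = 1 then a else b) else (if j = 1 then c else d))"
definition cmscale :: "complex \<Rightarrow> complex^2^2 \<Rightarrow> complex^2^2" where
  "cmscale c M = (\<chi> i j. c * M $ i $ j)"

definition t0 :: "complex^2^2" where
  "t0 = cmscale (- \<i> / 2) (mat2 1 0 0 (-1))"
definition t1 :: "real \<Rightarrow> complex^2^2" where
  "t1 lam = cmscale (- \<i> / 2) (mat2 0 (- complex_of_real lam) 1 0)"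
definition t2 :: "real \<Rightarrow> complex^2^2" where
  "t2 lam = cmscale (1 / 2) (mat2 0 (complex_of_real lam) 1 0)"
definition tp :: "real \<Rightarrow> complex^2^2" where
  "tp lam = t1 lam + cmscale \<i> (t2 lam)"
definition tm :: "real \<Rightarrow> complex^2^2" where
  "tm lam = t1 lam - cmscale \<i> (t2 lam)"

definition conn :: "real \<Rightarrow> complex form1 \<Rightarrow> complex form1 \<Rightarrow> (complex^2^2) form1" where
  "conn lam G E z =
    (let F = (\<lambda>g e. cmscale (- g) t0
                     + cmscale (\<i> / 2) (cmscale e (tm lam) - cmscale (cnj e) (tp lam)))
     in (F (fst (G z)) (fst (E z)), F (snd (G z)) (snd (E z))))"

end

theory Submission
  imports Defs
begin

text \<open>The connection -G t0 + (i/2)(E t_- - cnj E t_+) depends real-linearly on the pair of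
  one-forms (G, E), so it commutes with pullback; this gives the formula for the pullback of A.
  For real G its curvature is again of this form, with components dG - (i lam/2) cnj E /\ E and
  dE - i G /\ E, so flatness means dG = (i lam/2) cnj E /\ E and dE = i G /\ E.  For
  G = a + Gamma_0 and E = phi e_0, the structure equations de_0 = i Gamma_0 /\ e_0 and
  dGamma_0 = K_0 omega_0 of the model surface turn these into the two vortex equations.\<close>

lemma frechet_derivative_linear_image:
  assumes "bounded_linear L" "f differentiable (at z)"
  shows "frechet_derivative (\<lambda>w. L (f w)) (at z) = (\<lambda>v. L (frechet_derivative f (at z) v))"
  using bounded_linear.has_derivative[OF assms(1) frechet_derivative_works[THEN iffD1, OF assms(2)]]
  by (metis frechet_derivative_at)

lemma frechet_derivative_Pair:
  assumes "f differentiable (at z)" "g differentiable (at z)"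
  shows "frechet_derivative (\<lambda>w. (f w, g w)) (at z)
           = (\<lambda>v. (frechet_derivative f (at z) v, frechet_derivative g (at z) v))"
  using has_derivative_Pair[OF assms[unfolded frechet_derivative_works]]
  by (metis frechet_derivative_at)

lemma frechet_derivative_add [simp]:
  assumes "f differentiable (at z)" "g differentiable (at z)"
  shows "frechet_derivative (\<lambda>w. f w + g w) (at z)
           = (\<lambda>v. frechet_derivative f (at z) v + frechet_derivative g (at z) v)"
  using has_derivative_add[OF assms[unfolded frechet_derivative_works]]
  by (metis frechet_derivative_at)

lemma frechet_derivative_diff [simp]:
  assumes "f differentiable (at z)" "g differentiable (at z)"
  shows "frechet_derivative (\<lambda>w. f w - g w) (at z)
           = (\<lambda>v. frechet_derivative f (at z) v - frechet_derivative g (at z) v)"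
  using has_derivative_diff[OF assms[unfolded frechet_derivative_works]]
  by (metis frechet_derivative_at)

lemma frechet_derivative_mult [simp]:
  fixes f g :: "'a::real_normed_vector \<Rightarrow> 'b::real_normed_algebra"
  assumes "f differentiable (at z)" "g differentiable (at z)"
  shows "frechet_derivative (\<lambda>w. f w * g w) (at z)
           = (\<lambda>v. f z * frechet_derivative g (at z) v + frechet_derivative f (at z) v * g z)"
  using has_derivative_mult[OF assms[unfolded frechet_derivative_works]]
  by (metis frechet_derivative_at)

lemma frechet_derivative_divide [simp]:
  fixes f g :: "'a::real_normed_vector \<Rightarrow> 'b::real_normed_field"
  assumes "f differentiable (at z)" "g differentiable (at z)" "g z \<noteq> 0"
  shows "frechet_derivative (\<lambda>w. f w / g w) (at z)
           = (\<lambda>v. (frechet_derivative f (at z) v * g z - f z * frechet_derivative g (at z) v) / (g z * g z))"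
  using has_derivative_divide'[OF assms(1,2)[unfolded frechet_derivative_works] assms(3)]
  by (metis frechet_derivative_at)

lemma frechet_derivative_cnj [simp]:
  "f differentiable (at z) \<Longrightarrow>
     frechet_derivative (\<lambda>w. cnj (f w)) (at z) = (\<lambda>v. cnj (frechet_derivative f (at z) v))"
  by (rule frechet_derivative_linear_image[OF bounded_linear_cnj])

lemma differentiable_linear_image:
  "bounded_linear L \<Longrightarrow> f differentiable (at z) \<Longrightarrow> (\<lambda>w. L (f w)) differentiable (at z)"
  using differentiable_chain_at[OF _ bounded_linear_imp_differentiable] by (auto simp: o_def)

lemma differentiable_cnj [simp]:
  "f differentiable (at z) \<Longrightarrow> (\<lambda>w. cnj (f w)) differentiable (at z)"
  by (rule differentiable_linear_image[OF bounded_linear_cnj])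

lemma differentiable_fst_snd:
  assumes "\<omega> differentiable (at z)"
  shows "(\<lambda>w. fst (\<omega> w)) differentiable (at z)" "(\<lambda>w. snd (\<omega> w)) differentiable (at z)"
  using assms bounded_linear_fst bounded_linear_snd by (auto intro: differentiable_linear_image)

lemma dform_eq_frechet_derivative:
  assumes "\<omega> differentiable (at z)"
  shows "dform \<omega> z = snd (frechet_derivative \<omega> (at z) 1) - fst (frechet_derivative \<omega> (at z) \<i>)"
  using assms
  by (simp add: dform_def pdx_def pdy_def frechet_derivative_linear_image[OF bounded_linear_fst]
      frechet_derivative_linear_image[OF bounded_linear_snd])

lemma fadd_eq: "fadd \<omega> \<eta> = (\<lambda>w. \<omega> w + \<eta> w)"
  by (simp add: fadd_def fun_eq_iff prod_eq_iff)

lemma differentiable_fadd: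
  "\<omega> differentiable (at z) \<Longrightarrow> \<eta> differentiable (at z) \<Longrightarrow> fadd \<omega> \<eta> differentiable (at z)"
  by (simp add: fadd_eq)

lemma dform_fadd:
  assumes "\<omega> differentiable (at z)" "\<eta> differentiable (at z)"
  shows "dform (fadd \<omega> \<eta>) z = dform \<omega> z + dform \<eta> z"
  using assms by (simp add: fadd_eq dform_eq_frechet_derivative)

lemma differentiable_fscale:
  assumes "\<phi> differentiable (at z)" "\<omega> differentiable (at z)"
  shows "fscale \<phi> \<omega> differentiable (at z)"
  using assms differentiable_fst_snd[OF assms(2)] by (simp add: fscale_def[abs_def])

lemma dform_fscale:
  assumes "\<phi> differentiable (at z)" "\<omega> differentiable (at z)"
  shows "dform (fscale \<phi> \<omega>) z = wedge (dfun \<phi>) \<omega> z + \<phi> z * dform \<omega> z"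
  using assms differentiable_fst_snd[OF assms(2)]
  by (simp add: dform_def fscale_def wedge_def dfun_def pdx_def pdy_def algebra_simps)

lemma differentiable_cform:
  assumes "a differentiable (at z)"
  shows "cform a differentiable (at z)"
  unfolding cform_def[abs_def]
  by (intro differentiable_Pair differentiable_linear_image[OF bounded_linear_of_real]
      differentiable_fst_snd assms)

lemma fconj_cform: "fconj (cform a) z = cform a z"
  by (simp add: fconj_def cform_def)

lemma mat2_add: "mat2 a b c d + mat2 a' b' c' d' = mat2 (a + a') (b + b') (c + c') (d + d')"
  by (simp add: mat2_def vec_eq_iff)

lemma mat2_diff: "mat2 a b c d - mat2 a' b' c' d' = mat2 (a - a') (b - b') (c - c') (d - d')"
  by (simp add: mat2_def vec_eq_iff)

lemma mat2_scaleR: "r *\<^sub>R mat2 a b c d = mat2 (r *\<^sub>R a) (r *\<^sub>R b) (r *\<^sub>R c) (r *\<^sub>R d)"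
  by (simp add: mat2_def vec_eq_iff)

lemma mat2_mult:
  "mat2 a b c d ** mat2 a' b' c' d'
     = mat2 (a * a' + b * c') (a * b' + b * d') (c * a' + d * c') (c * b' + d * d')"
  by (simp add: mat2_def matrix_matrix_mult_def vec_eq_iff forall_2 UNIV_2)

lemma mat2_eq_iff: "mat2 a b c d = mat2 a' b' c' d' \<longleftrightarrow> a = a' \<and> b = b' \<and> c = c' \<and> d = d'"
  by (auto simp: mat2_def vec_eq_iff forall_2)

lemma mat2_eq_0_iff: "mat2 a b c d = 0 \<longleftrightarrow> a = 0 \<and> b = 0 \<and> c = 0 \<and> d = 0"
  by (auto simp: mat2_def vec_eq_iff forall_2)

definition conn_coeff :: "real \<Rightarrow> complex \<Rightarrow> complex \<Rightarrow> complex^2^2" where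
  "conn_coeff lam g e = cmscale (- g) t0 + cmscale (\<i> / 2) (cmscale e (tm lam) - cmscale (cnj e) (tp lam))"

lemma conn_apply:
  "conn lam G E z = (conn_coeff lam (fst (G z)) (fst (E z)), conn_coeff lam (snd (G z)) (snd (E z)))"
  by (simp add: conn_def conn_coeff_def Let_def)

lemma conn_coeff_mat2:
  "conn_coeff lam g e = mat2 (\<i> * g / 2) (of_real lam * cnj e / 2) (e / 2) (- \<i> * g / 2)"
  by (simp add: conn_coeff_def t0_def tm_def tp_def t1_def t2_def mat2_def cmscale_def vec_eq_iff
      forall_2 algebra_simps)

lemma conn_coeff_add: "conn_coeff lam g e + conn_coeff lam g' e' = conn_coeff lam (g + g') (e + e')"
  by (simp add: conn_coeff_mat2 mat2_add field_simps)

lemma conn_coeff_diff: "conn_coeff lam g e - conn_coeff lam g' e' = conn_coeff lam (g - g') (e - e')"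
  by (simp add: conn_coeff_mat2 mat2_diff field_simps)

lemma conn_coeff_scaleR: "r *\<^sub>R conn_coeff lam g e = conn_coeff lam (r *\<^sub>R g) (r *\<^sub>R e)"
  unfolding conn_coeff_mat2 mat2_scaleR mat2_eq_iff by (simp add: scaleR_conv_of_real)

lemma conn_coeff_eq_0_iff: "conn_coeff lam g e = 0 \<longleftrightarrow> g = 0 \<and> e = 0"
  by (auto simp: conn_coeff_mat2 mat2_eq_0_iff)

lemma conn_coeff_commutator:
  assumes "cnj g = g" "cnj g' = g'"
  shows "conn_coeff lam g e ** conn_coeff lam g' e' - conn_coeff lam g' e' ** conn_coeff lam g e
           = conn_coeff lam (- (\<i> * of_real lam / 2) * (cnj e * e' - cnj e' * e)) (- \<i> * (g * e' - g' * e))"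
  using assms unfolding conn_coeff_mat2 mat2_mult mat2_diff mat2_eq_iff
  by (simp add: field_simps)

lemma pullback_conn: "pullback f (conn lam G E) z = conn lam (pullback f G) (pullback f E) z"
  by (simp add: pullback_def conn_apply conn_coeff_scaleR conn_coeff_add)

lemma dform_conn:
  assumes G: "G differentiable (at z)" and E: "E differentiable (at z)"
  shows "dform (conn lam G E) z = conn_coeff lam (dform G z) (dform E z)"
proof -
  define L :: "(complex \<times> complex) \<times> (complex \<times> complex) \<Rightarrow> (complex^2^2) \<times> (complex^2^2)"
    where "L = (\<lambda>(p, q). (conn_coeff lam (fst p) (fst q), conn_coeff lam (snd p) (snd q)))"
  have "linear L"
    by (rule linearI) (auto simp: L_def conn_coeff_add conn_coeff_scaleR)
  then have L: "bounded_linear L"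
    by (simp add: linear_conv_bounded_linear)
  have conn: "conn lam G E = (\<lambda>w. L (G w, E w))"
    by (simp add: L_def conn_apply fun_eq_iff)
  have GE: "(\<lambda>w. (G w, E w)) differentiable (at z)"
    using G E by simp
  then have "conn lam G E differentiable (at z)"
    unfolding conn by (rule differentiable_linear_image[OF L])
  moreover have "frechet_derivative (conn lam G E) (at z)
      = (\<lambda>v. L (frechet_derivative G (at z) v, frechet_derivative E (at z) v))"
    unfolding conn frechet_derivative_linear_image[OF L GE] frechet_derivative_Pair[OF G E] ..
  ultimately show ?thesis
    using G E by (simp add: dform_eq_frechet_derivative L_def conn_coeff_diff)
qed

lemma mwedge_conn_self:
  assumes "fconj G z = G z"
  shows "mwedge (conn lam G E) (conn lam G E) z
           = conn_coeff lam (- (\<i> * of_real lam / 2) * wedge (fconj E) E z) (- \<i> * wedge G E z)"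
  using assms
  by (simp add: mwedge_def conn_apply conn_coeff_commutator fconj_def wedge_def prod_eq_iff)

lemma flat_at_conn_iff:
  assumes "G differentiable (at z)" "E differentiable (at z)" "fconj G z = G z"
  shows "flat_at (conn lam G E) z
           \<longleftrightarrow> dform G z = \<i> * of_real lam / 2 * wedge (fconj E) E z \<and> dform E z = \<i> * wedge G E z"
  using assms
  by (simp add: flat_at_def dform_conn mwedge_conn_self conn_coeff_add conn_coeff_eq_0_iff)

text \<open>The denominator 1 + K |z|^2 of the model metric, written as a polynomial in z and
  cnj z so that the derivative rules above apply to it.\<close>

definition conformal_factor :: "real \<Rightarrow> complex \<Rightarrow> complex" where
  "conformal_factor K w = 1 + of_real K * (w * cnj w)"

lemma conformal_factor_eq: "complex_of_real (1 + K * (cmod w)^2) = conformal_factor K w"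
  by (simp add: conformal_factor_def flip: complex_norm_square)

lemma conformal_factor_nonzero: "1 + K * (cmod w)^2 \<noteq> 0 \<Longrightarrow> conformal_factor K w \<noteq> 0"
  by (metis conformal_factor_eq of_real_eq_0_iff)

lemma cnj_conformal_factor [simp]: "cnj (conformal_factor K w) = conformal_factor K w"
  by (simp add: conformal_factor_def mult.commute)

lemma differentiable_conformal_factor [simp]: "conformal_factor K differentiable (at z)"
  unfolding conformal_factor_def[abs_def] by simp

lemma frechet_derivative_conformal_factor [simp]:
  "frechet_derivative (conformal_factor K) (at z) = (\<lambda>v. of_real K * (z * cnj v + v * cnj z))"
  unfolding conformal_factor_def[abs_def] by simp

lemma coframe_eq: "coframe K = (\<lambda>w. (2 / conformal_factor K w, 2 * \<i> / conformal_factor K w))"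
  unfolding coframe_def fscale_def[abs_def] dz_form_def conformal_factor_eq by simp

lemma spin_eq:
  "spin K = (\<lambda>w. (\<i> * of_real K * (w - cnj w) / conformal_factor K w,
                   of_real K * (w + cnj w) / conformal_factor K w))"
  unfolding spin_def fscale_def[abs_def] fsub_def dz_form_def dzbar_form_def conformal_factor_eq
  by (simp add: algebra_simps add_divide_distrib)

lemma differentiable_coframe:
  "1 + K * (cmod z)^2 \<noteq> 0 \<Longrightarrow> coframe K differentiable (at z)"
  by (simp add: coframe_eq conformal_factor_nonzero)

lemma differentiable_spin:
  "1 + K * (cmod z)^2 \<noteq> 0 \<Longrightarrow> spin K differentiable (at z)"
  by (simp add: spin_eq conformal_factor_nonzero)

lemma fconj_spin: "fconj (spin K) z = spin K z"
  by (simp add: fconj_def spin_eq conformal_factor_def algebra_simps)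

lemma dform_coframe:
  assumes "1 + K * (cmod z)^2 \<noteq> 0"
  shows "dform (coframe K) z = \<i> * wedge (spin K) (coframe K) z"
  using conformal_factor_nonzero[OF assms]
  by (simp add: dform_def coframe_eq spin_eq wedge_def pdx_def pdy_def field_simps)

lemma dform_spin:
  assumes "1 + K * (cmod z)^2 \<noteq> 0"
  shows "dform (spin K) z = of_real K * kahler K z"
  using conformal_factor_nonzero[OF assms]
  by (simp add: dform_def coframe_eq spin_eq kahler_def fconj_def wedge_def pdx_def pdy_def field_simps)
    (simp add: conformal_factor_def algebra_simps)

lemma vortex_first_equation_iff:
  assumes "1 + K * (cmod z)^2 \<noteq> 0" "\<phi> differentiable (at z)"
  shows "dform (fscale \<phi> (coframe K)) z = \<i> * wedge (fadd (cform a) (spin K)) (fscale \<phi> (coframe K)) z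
           \<longleftrightarrow> wedge (fsub (dfun \<phi>) (fscale (\<lambda>w. \<i> * \<phi> w) (cform a))) (coframe K) z = 0"
  using assms
  by (simp add: dform_fscale differentiable_coframe dform_coframe wedge_def fadd_def fsub_def fscale_def
      algebra_simps)

lemma vortex_second_equation_iff:
  assumes "1 + K * (cmod z)^2 \<noteq> 0" "a differentiable (at z)"
  shows "dform (fadd (cform a) (spin K)) z
           = \<i> * of_real lam / 2 * wedge (fconj (fscale \<phi> (coframe K))) (fscale \<phi> (coframe K)) z
         \<longleftrightarrow> dform (cform a) z = of_real (- K - lam * (cmod (\<phi> z))^2) * kahler K z"
proof -
  have "dform (fadd (cform a) (spin K)) z = dform (cform a) z + of_real K * kahler K z"
    using assms by (simp add: dform_fadd differentiable_cform differentiable_spin dform_spin)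
  moreover have "wedge (fconj (fscale \<phi> (coframe K))) (fscale \<phi> (coframe K)) z
      = 2 * \<i> * of_real ((cmod (\<phi> z))^2) * kahler K z"
    unfolding complex_norm_square by (simp add: kahler_def wedge_def fconj_def fscale_def algebra_simps)
  ultimately show ?thesis
    by (simp add: algebra_simps eq_neg_iff_add_eq_0)
qed

lemma flat_at_conn_iff_vortex:
  assumes K: "1 + K * (cmod z)^2 \<noteq> 0" and \<phi>: "\<phi> differentiable (at z)" and a: "a differentiable (at z)"
  shows "flat_at (conn lam (fadd (cform a) (spin K)) (fscale \<phi> (coframe K))) z
    \<longleftrightarrow> wedge (fsub (dfun \<phi>) (fscale (\<lambda>w. \<i> * \<phi> w) (cform a))) (coframe K) z = 0
      \<and> dform (cform a) z = of_real (- K - lam * (cmod (\<phi> z))^2) * kahler K z"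
proof -
  have "fconj (fadd (cform a) (spin K)) z = fadd (cform a) (spin K) z"
    using fconj_cform[of a z] fconj_spin[of K z] by (simp add: fconj_def fadd_def prod_eq_iff)
  then have "flat_at (conn lam (fadd (cform a) (spin K)) (fscale \<phi> (coframe K))) z
    \<longleftrightarrow> dform (fadd (cform a) (spin K)) z
          = \<i> * of_real lam / 2 * wedge (fconj (fscale \<phi> (coframe K))) (fscale \<phi> (coframe K)) z
      \<and> dform (fscale \<phi> (coframe K)) z
          = \<i> * wedge (fadd (cform a) (spin K)) (fscale \<phi> (coframe K)) z"
    using K \<phi> a
    by (intro flat_at_conn_iff differentiable_fadd differentiable_cform differentiable_spin
        differentiable_fscale differentiable_coframe)
  then show ?thesis
    using vortex_first_equation_iff[OF K \<phi>] vortex_second_equation_iff[OF K a] by blast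
qed

theorem corollary3p2:
  fixes lam0 lam :: real and U :: "complex set" and f :: "complex \<Rightarrow> complex"
  assumes lam0: "lam0 \<in> {-1, 0, 1}" and lam: "lam \<in> {-1, 0, 1}"
    and U: "open U" "\<forall>z\<in>U. 1 + (- lam0) * (cmod z)^2 > 0"
  shows
    "(\<forall>(\<phi> :: complex \<Rightarrow> complex) (a :: real form1).
        f holomorphic_on U
        \<longrightarrow> (\<forall>z\<in>U. 1 + (- lam) * (cmod (f z))^2 > 0)
        \<longrightarrow> (\<forall>z\<in>U. pullback f (coframe (- lam)) z = fscale \<phi> (coframe (- lam0)) z)
        \<longrightarrow> (\<forall>z\<in>U. cform a z = fsub (pullback f (spin (- lam))) (spin (- lam0)) z)
        \<longrightarrow> (\<forall>z\<in>U. pullback f (conn lam (spin (- lam)) (coframe (- lam))) z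
                    = conn lam (fadd (cform a) (spin (- lam0))) (fscale \<phi> (coframe (- lam0))) z))
     \<and>
     (\<forall>(\<phi> :: complex \<Rightarrow> complex) (a :: real form1).
        (\<forall>z\<in>U. \<phi> differentiable (at z) \<and> a differentiable (at z))
        \<longrightarrow> ((\<forall>z\<in>U. flat_at (conn lam (fadd (cform a) (spin (- lam0))) (fscale \<phi> (coframe (- lam0)))) z)
             \<longleftrightarrow>
             (\<forall>z\<in>U.
                wedge (fsub (dfun \<phi>) (fscale (\<lambda>w. \<i> * \<phi> w) (cform a))) (coframe (- lam0)) z = 0
              \<and> dform (cform a) z
                  = complex_of_real (lam0 - lam * (cmod (\<phi> z))^2) * kahler (- lam0) z)))"
proof (intro conjI allI impI)
  fix \<phi> :: "complex \<Rightarrow> complex" and a :: "real form1"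
  assume phi_def: "\<forall>z\<in>U. pullback f (coframe (- lam)) z = fscale \<phi> (coframe (- lam0)) z"
    and a_def: "\<forall>z\<in>U. cform a z = fsub (pullback f (spin (- lam))) (spin (- lam0)) z"
  show "\<forall>z\<in>U. pullback f (conn lam (spin (- lam)) (coframe (- lam))) z
                = conn lam (fadd (cform a) (spin (- lam0))) (fscale \<phi> (coframe (- lam0))) z"
  proof
    fix z assume "z \<in> U"
    then have "pullback f (spin (- lam)) z = fadd (cform a) (spin (- lam0)) z"
      using a_def by (simp add: fadd_def fsub_def)
    then show "pullback f (conn lam (spin (- lam)) (coframe (- lam))) z
                = conn lam (fadd (cform a) (spin (- lam0))) (fscale \<phi> (coframe (- lam0))) z"
      using phi_def \<open>z \<in> U\<close> by (simp add: pullback_conn conn_apply)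
  qed
next
  fix \<phi> :: "complex \<Rightarrow> complex" and a :: "real form1"
  assume "\<forall>z\<in>U. \<phi> differentiable (at z) \<and> a differentiable (at z)"
  with U(2) show "(\<forall>z\<in>U. flat_at (conn lam (fadd (cform a) (spin (- lam0))) (fscale \<phi> (coframe (- lam0)))) z)
    \<longleftrightarrow> (\<forall>z\<in>U. wedge (fsub (dfun \<phi>) (fscale (\<lambda>w. \<i> * \<phi> w) (cform a))) (coframe (- lam0)) z = 0
        \<and> dform (cform a) z = complex_of_real (lam0 - lam * (cmod (\<phi> z))^2) * kahler (- lam0) z)"
    by (intro ball_cong) (auto simp: flat_at_conn_iff_vortex)
qed

end
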